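(* Let $(F,(a,b))$ be an edge-rooted graph such that $F$ is rigid and every two distinct vertices of $F$ have a triangle $K_3$ in their common neighbourhood. Then the set of homomorphisms from $F^{\mathrm{sym}}$ to itself is exactly $\{\mathrm{id},\sigma\}$, where $\sigma$ is an automorphism of $F^{\mathrm{sym}}$ with $\sigma(a)=b$ and $\sigma(b)=a$.
   Context: An edge-rooted graph is a pair $(F,(a,b))$ with $F$ a finite simple graph and $(a,b)$ an orientation of an edge of $F$. A graph is rigid if its only endomorphism is the identity. The symmetrization $F^{\mathrm{sym}}$ is obtained by taking two disjoint copies $F_1,F_2$ of $F$, with root vertices $a_1,b_1$ in $F_1$ and $a_2,b_2$ in $F_2$ (copies of $a,b$), and identifying $a_1$ with $b_2$ (call the resulting vertex $a$) and $b_1$ with $a_2$ (call it $b$); it is considered as edge-rooted graph $(F^{\mathrm{sym}},(a,b))$. *)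

theory Defs
  imports Main
begin

definition simple_graph :: "'a set \<Rightarrow> ('a \<Rightarrow> 'a \<Rightarrow> bool) \<Rightarrow> bool" where
  "simple_graph V E \<longleftrightarrow> finite V \<and> (\<forall>x y. E x y \<longrightarrow> x \<in> V \<and> y \<in> V)
     \<and> (\<forall>x y. E x y \<longrightarrow> E y x) \<and> (\<forall>x. \<not> E x x)"

definition graph_hom :: "'a set \<Rightarrow> ('a \<Rightarrow> 'a \<Rightarrow> bool) \<Rightarrow> 'b set \<Rightarrow> ('b \<Rightarrow> 'b \<Rightarrow> bool) \<Rightarrow> ('a \<Rightarrow> 'b) \<Rightarrow> bool" where
  "graph_hom V E V' E' f \<longleftrightarrow> (\<forall>x\<in>V. f x \<in> V') \<and>
     (\<forall>x\<in>V. \<forall>y\<in>V. E x y \<longrightarrow> E' (f x) (f y))"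

definition graph_aut :: "'a set \<Rightarrow> ('a \<Rightarrow> 'a \<Rightarrow> bool) \<Rightarrow> ('a \<Rightarrow> 'a) \<Rightarrow> bool" where
  "graph_aut V E f \<longleftrightarrow> bij_betw f V V \<and> (\<forall>x\<in>V. \<forall>y\<in>V. E x y \<longleftrightarrow> E (f x) (f y))"

definition rigid :: "'a set \<Rightarrow> ('a \<Rightarrow> 'a \<Rightarrow> bool) \<Rightarrow> bool" where
  "rigid V E \<longleftrightarrow> (\<forall>f. graph_hom V E V E f \<longrightarrow> (\<forall>x\<in>V. f x = x))"

text \<open>Symmetrization. Copy 1 is tagged True, copy 2 is tagged False. The vertex (v,i)
  is mapped to a canonical representative: a_2 is identified with b_1 = (b,True) and
  b_2 with a_1 = (a,True).\<close>
fun sym_canon :: "'a \<Rightarrow> 'a \<Rightarrow> 'a \<times> bool \<Rightarrow> 'a \<times> bool" where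
  "sym_canon a b (v, True) = (v, True)"
| "sym_canon a b (v, False) = (if v = a then (b, True) else if v = b then (a, True) else (v, False))"

definition sym_verts :: "'a set \<Rightarrow> 'a \<Rightarrow> 'a \<Rightarrow> ('a \<times> bool) set" where
  "sym_verts V a b = sym_canon a b ` (V \<times> UNIV)"

definition sym_edges :: "('a \<Rightarrow> 'a \<Rightarrow> bool) \<Rightarrow> 'a \<Rightarrow> 'a \<Rightarrow> 'a \<times> bool \<Rightarrow> 'a \<times> bool \<Rightarrow> bool" where
  "sym_edges E a b x y \<longleftrightarrow> (\<exists>u v i. E u v \<and> x = sym_canon a b (u, i) \<and> y = sym_canon a b (v, i))"

end

theory Submission
  imports Defs
begin

text \<open>Each copy of F sits in the symmetrization as an induced subgraph, and a vertex
  other than the two shared roots has all its neighbours in its own copy. An endomorphism maps a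
  triangle to three distinct vertices, at least one of which is not a root; so the common triangle
  of two vertices u, v of one copy forces the images of u and v into a common copy. Hence each copy
  is mapped into a single copy, and rigidity of F makes the map there the canonical one. Since the
  roots are shared with the roles of a and b exchanged, the two copies go to different copies,
  which leaves exactly the identity and the swap of the copies.\<close>

definition triangles_in_common_nbhd :: "'a set \<Rightarrow> ('a \<Rightarrow> 'a \<Rightarrow> bool) \<Rightarrow> bool" where
  "triangles_in_common_nbhd V E \<longleftrightarrow> (\<forall>u\<in>V. \<forall>v\<in>V. u \<noteq> v \<longrightarrow>
     (\<exists>x y z. E u x \<and> E v x \<and> E u y \<and> E v y \<and> E u z \<and> E v z \<and> E x y \<and> E y z \<and> E x z))"

lemma graph_hom_cong:
  "graph_hom V E V' E' g \<Longrightarrow> \<forall>x\<in>V. f x = g x \<Longrightarrow> graph_hom V E V' E' f"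
  unfolding graph_hom_def by simp

lemma graph_aut_imp_hom: "graph_aut V E f \<Longrightarrow> graph_hom V E V E f"
  unfolding graph_aut_def graph_hom_def by (auto dest: bij_betwE)

lemma sym_canon_inj_iff: "a \<noteq> b \<Longrightarrow> sym_canon a b (u, i) = sym_canon a b (v, i) \<longleftrightarrow> u = v"
  by (cases i) auto

lemma inj_on_sym_canon: "a \<noteq> b \<Longrightarrow> inj_on (\<lambda>u. sym_canon a b (u, i)) V"
  by (simp add: inj_on_def sym_canon_inj_iff)

lemma sym_canon_cross_iff:
  "a \<noteq> b \<Longrightarrow> sym_canon a b (p, True) = sym_canon a b (q, False) \<longleftrightarrow>
     (p = b \<and> q = a) \<or> (p = a \<and> q = b)"
  by auto

locale edge_rooted_graph =
  fixes V :: "'a set" and E :: "'a \<Rightarrow> 'a \<Rightarrow> bool" and a b :: 'a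
  assumes simple: "simple_graph V E" and root_edge: "E a b"
begin

abbreviation sym_V :: "('a \<times> bool) set" where "sym_V \<equiv> sym_verts V a b"
abbreviation sym_E :: "'a \<times> bool \<Rightarrow> 'a \<times> bool \<Rightarrow> bool" where "sym_E \<equiv> sym_edges E a b"

lemma edge_sym: "E x y \<Longrightarrow> E y x"
  using simple unfolding simple_graph_def by blast

lemma edge_irrefl: "\<not> E x x"
  using simple unfolding simple_graph_def by blast

lemma edge_in_V: "E x y \<Longrightarrow> x \<in> V \<and> y \<in> V"
  using simple unfolding simple_graph_def by blast

lemma roots_distinct: "a \<noteq> b"
  using root_edge edge_irrefl by metis

definition copy :: "bool \<Rightarrow> ('a \<times> bool) set" where
  "copy i = (\<lambda>u. sym_canon a b (u, i)) ` V"

lemma sym_V_eq_copies: "sym_V = copy True \<union> copy False"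
proof -
  have "V \<times> UNIV = (\<lambda>u. (u, True)) ` V \<union> (\<lambda>u. (u, False)) ` V"
    by (auto simp: image_iff)
  then show ?thesis
    unfolding sym_verts_def copy_def by (simp only: image_Un image_image)
qed

lemma sym_V_elim:
  assumes "x \<in> sym_V" obtains u i where "u \<in> V" "x = sym_canon a b (u, i)"
  using assms unfolding sym_verts_def by auto

lemma sym_canon_in_sym_V: "u \<in> V \<Longrightarrow> sym_canon a b (u, i) \<in> sym_V"
  unfolding sym_verts_def by blast

lemma sym_E_copy_iff: "sym_E (sym_canon a b (p, j)) (sym_canon a b (q, j)) \<longleftrightarrow> E p q"
proof
  assume "sym_E (sym_canon a b (p, j)) (sym_canon a b (q, j))"
  then obtain u v k where e: "E u v" and p: "sym_canon a b (p, j) = sym_canon a b (u, k)"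
    and q: "sym_canon a b (q, j) = sym_canon a b (v, k)"
    unfolding sym_edges_def by blast
  show "E p q"
  proof (cases "k = j")
    case True
    then show ?thesis using p q e sym_canon_inj_iff[OF roots_distinct] by simp
  next
    case False
    \<comment> \<open>then both p and q are roots, and the edge is the root edge in one of its orientations\<close>
    then have "(p = b \<and> u = a \<or> p = a \<and> u = b) \<and> (q = b \<and> v = a \<or> q = a \<and> v = b)"
      using p q sym_canon_cross_iff[OF roots_distinct] by (cases j; cases k) metis+
    then show ?thesis using e edge_irrefl edge_sym root_edge by blast
  qed
qed (auto simp: sym_edges_def)

lemma sym_E_irrefl: "\<not> sym_E x x"
  unfolding sym_edges_def using sym_canon_inj_iff[OF roots_distinct] edge_irrefl by metis

lemma sym_E_nonroot_same_copy:
  assumes "sym_E P X" "X \<noteq> (a, True)" "X \<noteq> (b, True)"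
  shows "P \<in> copy (snd X)"
proof -
  obtain u v k where e: "E u v" and "P = sym_canon a b (u, k)" and X: "X = sym_canon a b (v, k)"
    using assms(1) unfolding sym_edges_def by blast
  moreover have "snd X = k" using X assms(2,3) by (cases k) (auto split: if_splits)
  ultimately show ?thesis using edge_in_V[OF e] unfolding copy_def by (auto intro: rev_image_eqI)
qed

definition swap :: "'a \<times> bool \<Rightarrow> 'a \<times> bool" where
  "swap p = sym_canon a b (fst p, \<not> snd p)"

lemma swap_sym_canon: "swap (sym_canon a b (u, i)) = sym_canon a b (u, \<not> i)"
  using roots_distinct unfolding swap_def by (cases i) auto

lemma swap_roots: "swap (a, True) = (b, True)" "swap (b, True) = (a, True)"
  using swap_sym_canon[of a True] swap_sym_canon[of b True] roots_distinct by auto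

lemma swap_in_sym_V: "x \<in> sym_V \<Longrightarrow> swap x \<in> sym_V"
  unfolding sym_verts_def using swap_sym_canon by auto

lemma swap_swap: "x \<in> sym_V \<Longrightarrow> swap (swap x) = x"
  unfolding sym_verts_def using swap_sym_canon by auto

lemma sym_E_swap: "sym_E x y \<Longrightarrow> sym_E (swap x) (swap y)"
  unfolding sym_edges_def using swap_sym_canon by metis

lemma swap_aut: "graph_aut sym_V sym_E swap"
  unfolding graph_aut_def
proof (intro conjI ballI)
  show "bij_betw swap sym_V sym_V"
    by (rule bij_betw_byWitness[where f' = swap]) (auto simp: swap_swap swap_in_sym_V)
  fix x y assume "x \<in> sym_V" "y \<in> sym_V"
  then show "sym_E x y \<longleftrightarrow> sym_E (swap x) (swap y)"
    using sym_E_swap swap_swap by metis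
qed

lemma hom_sym_E_copy:
  assumes "graph_hom sym_V sym_E sym_V sym_E f" "E p q"
  shows "sym_E (f (sym_canon a b (p, i))) (f (sym_canon a b (q, i)))"
  using assms sym_E_copy_iff sym_canon_in_sym_V edge_in_V unfolding graph_hom_def by blast

lemma hom_pair_same_copy:
  assumes hom: "graph_hom sym_V sym_E sym_V sym_E f" and tri: "triangles_in_common_nbhd V E"
    and uv: "u \<in> V" "v \<in> V" "u \<noteq> v"
  shows "\<exists>j. f (sym_canon a b (u, i)) \<in> copy j \<and> f (sym_canon a b (v, i)) \<in> copy j"
proof -
  define c where "c w = f (sym_canon a b (w, i))" for w
  obtain x y z where t: "E u x" "E v x" "E u y" "E v y" "E u z" "E v z" "E x y" "E y z" "E x z"
    using tri uv unfolding triangles_in_common_nbhd_def by meson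
  have ce: "E p q \<Longrightarrow> sym_E (c p) (c q)" for p q
    unfolding c_def by (rule hom_sym_E_copy[OF hom])
  have "c x \<noteq> c y" "c y \<noteq> c z" "c x \<noteq> c z"
    using ce t(7-9) sym_E_irrefl by metis+
  then obtain X where X: "X \<in> {c x, c y, c z}" "X \<noteq> (a, True)" "X \<noteq> (b, True)"
    by (metis insertCI)
  have "sym_E (c u) X" "sym_E (c v) X"
    using X(1) ce t(1-6) by auto
  then show ?thesis
    using sym_E_nonroot_same_copy X(2,3) unfolding c_def by blast
qed

lemma hom_image_copy:
  assumes hom: "graph_hom sym_V sym_E sym_V sym_E f" and tri: "triangles_in_common_nbhd V E"
  shows "\<exists>j. f ` copy i \<subseteq> copy j"
proof (rule ccontr)
  assume "\<not> ?thesis"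
  then obtain u1 u2 where u: "u1 \<in> V" "u2 \<in> V"
    and u1: "f (sym_canon a b (u1, i)) \<notin> copy True"
    and u2: "f (sym_canon a b (u2, i)) \<notin> copy False"
    unfolding copy_def by blast
  have "f (sym_canon a b (u1, i)) \<in> copy True \<union> copy False"
    using hom u(1) sym_canon_in_sym_V sym_V_eq_copies unfolding graph_hom_def by blast
  then have "u1 \<noteq> u2" using u1 u2 by auto
  then show False
    using hom_pair_same_copy[OF hom tri u] u1 u2 by (metis (full_types))
qed

lemma hom_on_copy:
  assumes hom: "graph_hom sym_V sym_E sym_V sym_E f" and rig: "rigid V E"
    and img: "f ` copy i \<subseteq> copy j"
  shows "\<forall>u\<in>V. f (sym_canon a b (u, i)) = sym_canon a b (u, j)"
proof -
  let ?c = "\<lambda>k u. sym_canon a b (u, k)"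
  define g where "g = the_inv_into V (?c j) \<circ> f \<circ> ?c i"
  have inj: "inj_on (?c j) V" by (rule inj_on_sym_canon[OF roots_distinct])
  have fc: "f (?c i u) \<in> ?c j ` V" if "u \<in> V" for u
    using img that unfolding copy_def by blast
  have g: "g u \<in> V" "?c j (g u) = f (?c i u)" if "u \<in> V" for u
    using fc[OF that] inj the_inv_into_into[OF inj] f_the_inv_into_f[OF inj]
    unfolding g_def by auto
  have "graph_hom V E V E g"
    unfolding graph_hom_def
  proof (intro conjI ballI impI)
    fix x y assume "x \<in> V" "y \<in> V" "E x y"
    then have "sym_E (?c j (g x)) (?c j (g y))"
      using g hom_sym_E_copy[OF hom] by simp
    then show "E (g x) (g y)" using sym_E_copy_iff by blast
  qed (use g in blast)
  then show ?thesis using rig g(2) unfolding rigid_def by metis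
qed

lemma sym_endo_id_or_swap:
  assumes hom: "graph_hom sym_V sym_E sym_V sym_E f"
    and tri: "triangles_in_common_nbhd V E" and rig: "rigid V E"
  shows "(\<forall>x\<in>sym_V. f x = x) \<or> (\<forall>x\<in>sym_V. f x = swap x)"
proof -
  obtain j where j: "\<forall>u\<in>V. f (sym_canon a b (u, i)) = sym_canon a b (u, j i)" for i
    using hom_on_copy[OF hom rig] hom_image_copy[OF hom tri] by metis
  have "a \<in> V" "b \<in> V" using edge_in_V root_edge by auto
  \<comment> \<open>the root a of the first copy is the root b of the second\<close>
  then have "sym_canon a b (a, j True) = sym_canon a b (b, j False)"
    using j[of True] j[of False] by (metis roots_distinct sym_canon.simps)
  then have "j False = (\<not> j True)"
    using sym_canon_inj_iff[OF roots_distinct] roots_distinct by (metis (full_types))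
  then have f: "\<forall>u\<in>V. f (sym_canon a b (u, k)) = sym_canon a b (u, k = j True)" for k
    using j by (cases k) (simp_all del: sym_canon.simps)
  show ?thesis
  proof (cases "j True")
    case True
    have "f x = x" if "x \<in> sym_V" for x
      using that f True by (elim sym_V_elim) (simp del: sym_canon.simps)
    then show ?thesis by blast
  next
    case False
    have "f x = swap x" if "x \<in> sym_V" for x
      using that f False swap_sym_canon by (elim sym_V_elim) (simp del: sym_canon.simps)
    then show ?thesis by blast
  qed
qed

end

theorem mainTheorem11:
  fixes V :: "'a set" and E :: "'a \<Rightarrow> 'a \<Rightarrow> bool" and a b :: 'a
  assumes "simple_graph V E"
    and "E a b"
    and "rigid V E"
    and "\<forall>u\<in>V. \<forall>v\<in>V. u \<noteq> v \<longrightarrow>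
           (\<exists>x y z. E u x \<and> E v x \<and> E u y \<and> E v y \<and> E u z \<and> E v z
                 \<and> E x y \<and> E y z \<and> E x z)"
  shows "\<exists>\<sigma>. graph_aut (sym_verts V a b) (sym_edges E a b) \<sigma>
            \<and> \<sigma> (a, True) = (b, True) \<and> \<sigma> (b, True) = (a, True)
            \<and> (\<forall>f. graph_hom (sym_verts V a b) (sym_edges E a b) (sym_verts V a b) (sym_edges E a b) f
                   \<longleftrightarrow> ((\<forall>x\<in>sym_verts V a b. f x = x) \<or> (\<forall>x\<in>sym_verts V a b. f x = \<sigma> x)))"
proof -
  interpret edge_rooted_graph V E a b
    using assms(1,2) by unfold_locales
  have tri: "triangles_in_common_nbhd V E"
    using assms(4) unfolding triangles_in_common_nbhd_def .
  have id_hom: "graph_hom sym_V sym_E sym_V sym_E id"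
    unfolding graph_hom_def by simp
  have "graph_hom sym_V sym_E sym_V sym_E f \<longleftrightarrow>
      (\<forall>x\<in>sym_V. f x = x) \<or> (\<forall>x\<in>sym_V. f x = swap x)" for f
  proof
    assume "graph_hom sym_V sym_E sym_V sym_E f"
    then show "(\<forall>x\<in>sym_V. f x = x) \<or> (\<forall>x\<in>sym_V. f x = swap x)"
      using sym_endo_id_or_swap tri assms(3) by blast
  next
    assume "(\<forall>x\<in>sym_V. f x = x) \<or> (\<forall>x\<in>sym_V. f x = swap x)"
    then show "graph_hom sym_V sym_E sym_V sym_E f"
      using graph_hom_cong[OF id_hom] graph_hom_cong[OF graph_aut_imp_hom[OF swap_aut]]
      by (metis id_apply)
  qed
  then show ?thesis
    using swap_aut swap_roots by blast
qed

end
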